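(* Let $\rho\in\mathbb N\cup\{\infty\}$, let $D$ be a Van Kampen diagram over $X_\rho$, and let $C\subset D$ be a simply connected cluster which is not complicated. Then $\|\partial C\|_\infty\le\mathrm{length}(\partial C)$ and $\|\partial C\|_1\le 2\,\mathrm{length}(\partial C)$.
   Context: Setting. $G=\langle S\mid\mathcal R\rangle$ is a finite presentation with $S$ finite symmetric and relators of length 2 or 3. $H_1,\dots,H_n\le G$, and $S_i\subset S$ is a finite symmetric generating set of $H_i$. Truncated relative presentation. For $\rho\in\mathbb N\cup\{\infty\}$, $\tilde H_i=\langle\tilde S_i\mid$ words of length $\le\rho$ over $S_i$ trivial in $H_i\rangle$, with $\tilde S_i$ a copy of $S_i$ and natural epimorphism $p_i:\tilde H_i\to H_i$. Put $\hat S=S\sqcup\tilde H_1\sqcup\dots\sqcup\tilde H_n$, each element of $\tilde H_i$ being a letter. $X_\rho$ is the presentation of $G$ with generators $\hat S$ and relators: - $\mathcal R'$, consisting of $\mathcal R$ together with the words $\tilde s^{-1}p_i(\tilde s)$ for $\tilde s\in\tilde S_i$; - for each $i$, all words of at most 3 letters of $\tilde H_i$ with trivial product in $\tilde H_i$. Complexity. $\|s\|=1$ for $s\in S$. For $a\in\tilde H_i$, $\|a\|$ is the word length with respect to $\tilde S_i$. For paths, $\|\cdot\|_1$ and $\|\cdot\|_\infty$ are the sum and the maximum of the edge-label complexities, and $\mathrm{length}$ is the number of edges. Clusters. 2-cells have type $\mathcal R'$ or $\tilde H_i$ according to their relator. Cells of the same type $\tilde H_i$ sharing an edge are cluster-adjacent.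 A cluster is the closure of a class of the transitive closure of this relation. $\partial C$ is the union of the edges of $C$ lying in exactly one 2-cell of $C$. Complicated. A cluster $C$ is complicated if $\partial C\cap\partial D$ contains at least two edges. *)

theory Defs
  imports Main "HOL-Library.Extended_Nat"
begin

text \<open>Letters of the alphabet S-hat: a generator of S, or an element of the
  truncated group H~_i (an equivalence class of words over the copy of S_i).\<close>
datatype 's letter = Base 's | Sub nat "'s list set"

inductive weq :: "('s \<Rightarrow> 's) \<Rightarrow> 's list set \<Rightarrow> 's list \<Rightarrow> 's list \<Rightarrow> bool"
  for iv R where
  weq_refl: "weq iv R w w"
| weq_sym: "weq iv R u v \<Longrightarrow> weq iv R v u"
| weq_trans: "weq iv R u v \<Longrightarrow> weq iv R v w \<Longrightarrow> weq iv R u w"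
| weq_cancel: "weq iv R (u @ [s, iv s] @ v) (u @ v)"
| weq_rel: "r \<in> R \<Longrightarrow> weq iv R (u @ r @ v) (u @ v)"

record 's relpres =
  gens :: "'s set"
  ginv :: "'s \<Rightarrow> 's"
  rels :: "'s list set"
  nsub :: nat
  subgens :: "nat \<Rightarrow> 's set"
  trunc :: enat

definition wf_relpres :: "'s relpres \<Rightarrow> bool" where
  "wf_relpres P \<longleftrightarrow>
     finite (gens P) \<and>
     (\<forall>s\<in>gens P. ginv P s \<in> gens P \<and> ginv P (ginv P s) = s) \<and>
     finite (rels P) \<and>
     (\<forall>r\<in>rels P. set r \<subseteq> gens P \<and> (length r = 2 \<or> length r = 3)) \<and>
     (\<forall>i<nsub P. subgens P i \<subseteq> gens P \<and> finite (subgens P i) \<and>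
                 (\<forall>s\<in>subgens P i. ginv P s \<in> subgens P i))"

definition G_triv :: "'s relpres \<Rightarrow> 's list \<Rightarrow> bool" where
  "G_triv P w \<longleftrightarrow> weq (ginv P) (rels P) w []"

text \<open>Relators of H~_i: words of length at most rho over S_i that are trivial in H_i
  (equivalently in G).\<close>
definition tr_rels :: "'s relpres \<Rightarrow> nat \<Rightarrow> 's list set" where
  "tr_rels P i = {w. set w \<subseteq> subgens P i \<and> enat (length w) \<le> trunc P \<and> G_triv P w}"

definition tcl :: "'s relpres \<Rightarrow> nat \<Rightarrow> 's list \<Rightarrow> 's list set" where
  "tcl P i w = {v. set v \<subseteq> subgens P i \<and> weq (ginv P) (tr_rels P i) w v}"

definition Htil :: "'s relpres \<Rightarrow> nat \<Rightarrow> 's list set set" where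
  "Htil P i = {tcl P i w | w. set w \<subseteq> subgens P i}"

definition tinv :: "'s relpres \<Rightarrow> nat \<Rightarrow> 's list set \<Rightarrow> 's list set" where
  "tinv P i a = tcl P i (rev (map (ginv P) (SOME w. w \<in> a)))"

definition hinv :: "'s relpres \<Rightarrow> 's letter \<Rightarrow> 's letter" where
  "hinv P x = (case x of Base s \<Rightarrow> Base (ginv P s) | Sub i a \<Rightarrow> Sub i (tinv P i a))"

definition winv :: "'s relpres \<Rightarrow> 's letter list \<Rightarrow> 's letter list" where
  "winv P w = rev (map (hinv P) w)"

definition letters :: "'s relpres \<Rightarrow> 's letter set" where
  "letters P = Base ` gens P \<union> (\<Union>i<nsub P. Sub i ` Htil P i)"

definition cx :: "'s letter \<Rightarrow> nat" where
  "cx x = (case x of Base s \<Rightarrow> 1 | Sub i a \<Rightarrow> (LEAST k. \<exists>w\<in>a. length w = k))"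

text \<open>The relators R' (R together with s~^-1 p_i(s~)).\<close>
definition relsR' :: "'s relpres \<Rightarrow> 's letter list set" where
  "relsR' P = map Base ` rels P \<union>
     {[Sub i (tcl P i [ginv P s]), Base s] | i s. i < nsub P \<and> s \<in> subgens P i}"

definition Hrels :: "'s relpres \<Rightarrow> nat \<Rightarrow> 's letter list set" where
  "Hrels P i = {x. length x \<le> 3 \<and>
     (\<exists>ws. list_all2 (\<lambda>l u. set u \<subseteq> subgens P i \<and> l = Sub i (tcl P i u)) x ws
           \<and> concat ws \<in> tcl P i [])}"

definition allrels :: "'s relpres \<Rightarrow> 's letter list set" where
  "allrels P = relsR' P \<union> (\<Union>i<nsub P. Hrels P i)"

text \<open>Darts (oriented edges), edge involution alpha, vertex rotation sigma,
  a dart of the outer face, and labels (label of a dart read along its direction).\<close>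
record ('d, 's) diagram =
  darts :: "'d set"
  alpha :: "'d \<Rightarrow> 'd"
  sigma :: "'d \<Rightarrow> 'd"
  outer :: 'd
  lab :: "'d \<Rightarrow> 's letter"

definition orb :: "('d \<Rightarrow> 'd) \<Rightarrow> 'd \<Rightarrow> 'd set" where
  "orb f x = {(f ^^ k) x | k. True}"

definition phi :: "('d, 's) diagram \<Rightarrow> 'd \<Rightarrow> 'd" where
  "phi D = sigma D \<circ> alpha D"

definition vertex :: "('d, 's) diagram \<Rightarrow> 'd \<Rightarrow> 'd set" where
  "vertex D d = orb (sigma D) d"

definition head :: "('d, 's) diagram \<Rightarrow> 'd \<Rightarrow> 'd set" where
  "head D d = vertex D (alpha D d)"

definition faces :: "('d, 's) diagram \<Rightarrow> 'd set set" where
  "faces D = orb (phi D) ` darts D"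

definition inner_faces :: "('d, 's) diagram \<Rightarrow> 'd set set" where
  "inner_faces D = faces D - {orb (phi D) (outer D)}"

definition fcyc :: "('d, 's) diagram \<Rightarrow> 'd \<Rightarrow> 'd list" where
  "fcyc D d = map (\<lambda>k. (phi D ^^ k) d) [0..<card (orb (phi D) d)]"

definition bword :: "('d, 's) diagram \<Rightarrow> 'd \<Rightarrow> 's letter list" where
  "bword D d = map (lab D) (fcyc D d)"

definition reads :: "'s relpres \<Rightarrow> ('d, 's) diagram \<Rightarrow> 's letter list set \<Rightarrow> 'd set \<Rightarrow> bool" where
  "reads P D W F \<longleftrightarrow> (\<exists>d\<in>F. bword D d \<in> W \<or> winv P (bword D d) \<in> W)"

definition planar_map :: "('d, 's) diagram \<Rightarrow> bool" where
  "planar_map D \<longleftrightarrow>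
     finite (darts D) \<and> outer D \<in> darts D \<and>
     bij_betw (alpha D) (darts D) (darts D) \<and>
     (\<forall>d\<in>darts D. alpha D (alpha D d) = d \<and> alpha D d \<noteq> d) \<and>
     bij_betw (sigma D) (darts D) (darts D) \<and>
     (\<forall>d\<in>darts D. \<forall>e\<in>darts D.
        (d, e) \<in> {(x, y). y = alpha D x \<or> y = sigma D x}\<^sup>*) \<and>
     int (card (vertex D ` darts D)) - int (card (darts D) div 2)
       + int (card (faces D)) = 2"

definition van_kampen :: "'s relpres \<Rightarrow> ('d, 's) diagram \<Rightarrow> bool" where
  "van_kampen P D \<longleftrightarrow> planar_map D \<and>
     (\<forall>d\<in>darts D. lab D d \<in> letters P \<and> lab D (alpha D d) = hinv P (lab D d)) \<and>
     (\<forall>F\<in>inner_faces D. reads P D (allrels P) F)"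

definition Hcell :: "'s relpres \<Rightarrow> ('d, 's) diagram \<Rightarrow> nat \<Rightarrow> 'd set \<Rightarrow> bool" where
  "Hcell P D i F \<longleftrightarrow> F \<in> inner_faces D \<and> reads P D (Hrels P i) F"

definition cadj :: "'s relpres \<Rightarrow> ('d, 's) diagram \<Rightarrow> nat \<Rightarrow> ('d set \<times> 'd set) set" where
  "cadj P D i = {(F, F'). Hcell P D i F \<and> Hcell P D i F' \<and> (\<exists>d\<in>F. alpha D d \<in> F')}"

definition cluster :: "'s relpres \<Rightarrow> ('d, 's) diagram \<Rightarrow> 'd set set \<Rightarrow> bool" where
  "cluster P D C \<longleftrightarrow>
     (\<exists>i<nsub P. \<exists>F. Hcell P D i F \<and> C = {F'. (F, F') \<in> (cadj P D i)\<^sup>*})"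

text \<open>Boundary of a set of 2-cells: the edges lying in exactly one of its 2-cells
  (incidences counted), each represented by its dart lying in the set.\<close>
definition bd :: "('d, 's) diagram \<Rightarrow> 'd set set \<Rightarrow> 'd set" where
  "bd D C = {d \<in> darts D. d \<in> \<Union>C \<and> alpha D d \<notin> \<Union>C}"

definition complicated :: "('d, 's) diagram \<Rightarrow> 'd set set \<Rightarrow> bool" where
  "complicated D C \<longleftrightarrow> card (bd D C \<inter> bd D (inner_faces D)) \<ge> 2"

definition bd_length :: "('d, 's) diagram \<Rightarrow> 'd set set \<Rightarrow> nat" where
  "bd_length D C = card (bd D C)"

definition bd_norm1 :: "('d, 's) diagram \<Rightarrow> 'd set set \<Rightarrow> nat" where
  "bd_norm1 D C = (\<Sum>d\<in>bd D C. cx (lab D d))"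

definition bd_norm_inf :: "('d, 's) diagram \<Rightarrow> 'd set set \<Rightarrow> nat" where
  "bd_norm_inf D C = Max (insert 0 ((\<lambda>d. cx (lab D d)) ` bd D C))"

definition kdarts :: "('d, 's) diagram \<Rightarrow> 'd set set \<Rightarrow> 'd set" where
  "kdarts D C = {d \<in> darts D. d \<in> \<Union>C \<or> alpha D d \<in> \<Union>C}"

definition is_path :: "('d, 's) diagram \<Rightarrow> 'd set set \<Rightarrow> 'd list \<Rightarrow> bool" where
  "is_path D C p \<longleftrightarrow> set p \<subseteq> kdarts D C \<and>
     (\<forall>j. Suc j < length p \<longrightarrow> vertex D (p ! Suc j) = head D (p ! j))"

definition closed_path :: "('d, 's) diagram \<Rightarrow> 'd set set \<Rightarrow> 'd list \<Rightarrow> bool" where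
  "closed_path D C p \<longleftrightarrow> is_path D C p \<and>
     (p \<noteq> [] \<longrightarrow> vertex D (hd p) = head D (last p))"

definition htpy_step :: "('d, 's) diagram \<Rightarrow> 'd set set \<Rightarrow> 'd list \<Rightarrow> 'd list \<Rightarrow> bool" where
  "htpy_step D C p q \<longleftrightarrow> is_path D C p \<and> is_path D C q \<and>
     ((\<exists>u v d. d \<in> kdarts D C \<and> p = u @ v \<and> q = u @ [d, alpha D d] @ v) \<or>
      (\<exists>u v d. d \<in> \<Union>C \<and> p = u @ v \<and> q = u @ fcyc D d @ v))"

definition htpy :: "('d, 's) diagram \<Rightarrow> 'd set set \<Rightarrow> 'd list \<Rightarrow> 'd list \<Rightarrow> bool" where
  "htpy D C = (\<lambda>p q. htpy_step D C p q \<or> htpy_step D C q p)\<^sup>*\<^sup>*"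

definition simply_connected :: "('d, 's) diagram \<Rightarrow> 'd set set \<Rightarrow> bool" where
  "simply_connected D C \<longleftrightarrow> kdarts D C \<noteq> {} \<and>
     (\<forall>x\<in>vertex D ` kdarts D C. \<forall>y\<in>vertex D ` kdarts D C. x = y \<or>
        (\<exists>p. is_path D C p \<and> p \<noteq> [] \<and> vertex D (hd p) = x \<and> head D (last p) = y)) \<and>
     (\<forall>p. closed_path D C p \<longrightarrow> htpy D C p [])"

end

theory Submission
  imports Defs
begin

text \<open>Every edge of \<open>\<partial>C\<close> carries a letter of \<open>H~_i\<close>. An edge of \<open>\<partial>C\<close> that also bounds
  a 2-cell outside \<open>C\<close> lies on a relator of type \<open>R'\<close>, so its letter has complexity 1;
  as \<open>C\<close> is not complicated, at most one boundary edge \<open>d0\<close> is exceptional. Since \<open>C\<close> is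
  simply connected, its boundary cycle is null-homotopic in \<open>C\<close>, and reading it in
  \<open>H~_i\<close> (where backtracks and the boundaries of the cells of \<open>C\<close> are trivial) expresses
  the letter of \<open>d0\<close> through the at most \<open>length(\<partial>C) - 1\<close> other boundary letters, each of
  complexity 1. Hence \<open>\<parallel>\<partial>C\<parallel>\<^sub>\<infinity> \<le> length(\<partial>C)\<close> and \<open>\<parallel>\<partial>C\<parallel>\<^sub>1 \<le> 2 length(\<partial>C)\<close>.\<close>

abbreviation inv_word :: "('s \<Rightarrow> 's) \<Rightarrow> 's list \<Rightarrow> 's list" where
  "inv_word iv w \<equiv> rev (map iv w)"

lemma weq_append_cong: "weq iv R u v \<Longrightarrow> weq iv R (x @ u @ y) (x @ v @ y)"
proof (induction arbitrary: x y rule: weq.induct)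
  case (weq_refl w) show ?case by (rule weq.weq_refl)
next
  case (weq_sym u v) then show ?case by (blast intro: weq.weq_sym)
next
  case (weq_trans u v w) then show ?case by (blast intro: weq.weq_trans)
next
  case (weq_cancel u s v)
  have "weq iv R ((x @ u) @ [s, iv s] @ (v @ y)) ((x @ u) @ (v @ y))" by (rule weq.weq_cancel)
  then show ?case by simp
next
  case (weq_rel r u v)
  have "weq iv R ((x @ u) @ r @ (v @ y)) ((x @ u) @ (v @ y))" using weq_rel by (rule weq.weq_rel)
  then show ?case by simp
qed

lemma weq_append:
  assumes "weq iv R u v" "weq iv R u' v'"
  shows "weq iv R (u @ u') (v @ v')"
proof -
  have "weq iv R (u @ u') (v @ u')" using weq_append_cong[OF assms(1), of "[]" u'] by simp
  moreover have "weq iv R (v @ u') (v @ v')" using weq_append_cong[OF assms(2), of v "[]"] by simp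
  ultimately show ?thesis by (rule weq_trans)
qed

lemma weq_concat: "list_all2 (weq iv R) xs ys \<Longrightarrow> weq iv R (concat xs) (concat ys)"
  by (induction rule: list_all2_induct) (auto intro: weq_refl weq_append)

lemma weq_append_inv_word: "weq iv R (w @ inv_word iv w) []"
proof (induction w rule: rev_induct)
  case (snoc x w)
  have "weq iv R (w @ [x, iv x] @ inv_word iv w) (w @ inv_word iv w)" by (rule weq_cancel)
  with snoc show ?case by (fastforce intro: weq_trans)
qed (simp add: weq_refl)

lemma inv_word_append_weq:
  assumes "\<forall>s\<in>set w. iv (iv s) = s"
  shows "weq iv R (inv_word iv w @ w) []"
  using assms
proof (induction w)
  case (Cons x w)
  have "weq iv R (inv_word iv w @ [iv x, iv (iv x)] @ w) (inv_word iv w @ w)" by (rule weq_cancel)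
  with Cons show ?case by (fastforce intro: weq_trans)
qed (simp add: weq_refl)

lemma weq_inv_word_trivial:
  assumes "\<forall>s\<in>set w. iv (iv s) = s" "weq iv R w []"
  shows "weq iv R (inv_word iv w) []"
proof -
  have "weq iv R (inv_word iv w @ w) (inv_word iv w @ [])"
    using assms(2) by (intro weq_append weq_refl)
  then show ?thesis using inv_word_append_weq[OF assms(1)] by (metis append_Nil2 weq_sym weq_trans)
qed

lemma weq_trivial_append_imp: "weq iv R (a @ r) [] \<Longrightarrow> weq iv R a (inv_word iv r)"
proof -
  assume "weq iv R (a @ r) []"
  then have "weq iv R (a @ r @ inv_word iv r) ([] @ inv_word iv r)"
    using weq_append[OF _ weq_refl] by fastforce
  moreover have "weq iv R (a @ r @ inv_word iv r) (a @ [])"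
    by (intro weq_append weq_refl weq_append_inv_word)
  ultimately show ?thesis by (metis append_Nil append_Nil2 weq_sym weq_trans)
qed

lemma weq_trivial_rotate: "weq iv R (a @ b) [] \<Longrightarrow> weq iv R (b @ a) []"
proof -
  assume "weq iv R (a @ b) []"
  then have "weq iv R (b @ (a @ b) @ inv_word iv b) (b @ [] @ inv_word iv b)"
    by (rule weq_append_cong)
  then have "weq iv R (b @ a @ b @ inv_word iv b) []"
    using weq_append_inv_word weq_trans by fastforce
  moreover have "weq iv R ((b @ a) @ b @ inv_word iv b) ((b @ a) @ [])"
    by (intro weq_append weq_refl weq_append_inv_word)
  ultimately show ?thesis by (metis append.assoc append_Nil2 weq_sym weq_trans)
qed

section \<open>Cycles of a permutation of a finite set\<close>

locale perm_on_finite =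
  fixes f :: "'a \<Rightarrow> 'a" and A :: "'a set"
  assumes finite: "finite A" and bij: "bij_betw f A A"
begin

lemma funpow_in: "x \<in> A \<Longrightarrow> (f ^^ k) x \<in> A"
  using bij by (induction k) (auto dest: bij_betwE)

lemma inj_on_funpow: "inj_on (f ^^ k) A"
proof (induction k)
  case (Suc k)
  have "inj_on f ((f ^^ k) ` A)"
    using bij funpow_in unfolding bij_betw_def by (blast intro: inj_on_subset)
  from comp_inj_on[OF Suc this] show ?case by (simp add: o_def)
qed simp

lemma funpow_cancel:
  assumes "x \<in> A" "a < b" "(f ^^ a) x = (f ^^ b) x"
  shows "(f ^^ (b - a)) x = x"
proof -
  have "(f ^^ a) x = (f ^^ a) ((f ^^ (b - a)) x)"
    using assms(2,3) by (metis funpow_add le_add_diff_inverse less_imp_le_nat o_apply)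
  from inj_onD[OF inj_on_funpow this[symmetric] funpow_in[OF assms(1)] assms(1)] show ?thesis .
qed

lemma periodic: assumes "x \<in> A" shows "\<exists>m>0. (f ^^ m) x = x"
proof -
  have "(\<lambda>k. (f ^^ k) x) ` {..card A} \<subseteq> A" using funpow_in assms by auto
  then have "\<not> inj_on (\<lambda>k. (f ^^ k) x) {..card A}"
    using card_inj_on_le[OF _ _ finite, of "\<lambda>k. (f ^^ k) x" "{..card A}"] by auto
  then obtain a b where "a \<noteq> b" "(f ^^ a) x = (f ^^ b) x"
    unfolding inj_on_def by blast
  then consider "a < b" "(f ^^ a) x = (f ^^ b) x" | "b < a" "(f ^^ b) x = (f ^^ a) x"
    by (cases a b rule: linorder_cases) auto
  then show ?thesis
  proof cases
    case 1 then show ?thesis using funpow_cancel[OF assms] by (intro exI[of _ "b - a"]) simp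
  next
    case 2 then show ?thesis using funpow_cancel[OF assms] by (intro exI[of _ "a - b"]) simp
  qed
qed

definition period :: "'a \<Rightarrow> nat" where
  "period x = (LEAST m. m > 0 \<and> (f ^^ m) x = x)"

lemma period: assumes "x \<in> A" shows "period x > 0" "(f ^^ period x) x = x"
  using LeastI_ex[OF periodic[OF assms]] unfolding period_def by auto

lemma funpow_mod_period: assumes "x \<in> A" shows "(f ^^ n) x = (f ^^ (n mod period x)) x"
proof -
  have "(f ^^ (period x * t)) x = x" for t
    by (induction t) (simp_all add: funpow_add period(2)[OF assms])
  moreover have "(f ^^ n) x = (f ^^ (n mod period x + period x * (n div period x))) x"
    by simp
  ultimately show ?thesis by (simp only: funpow_add o_apply)
qed

lemma inj_on_funpow_below_period:
  assumes "x \<in> A" shows "inj_on (\<lambda>k. (f ^^ k) x) {..<period x}"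
proof -
  have False if "a < b" "b < period x" "(f ^^ a) x = (f ^^ b) x" for a b
  proof -
    have "(f ^^ (b - a)) x = x" using funpow_cancel[OF assms that(1,3)] .
    moreover have "0 < b - a" "b - a < period x" using that by auto
    ultimately show False unfolding period_def using not_less_Least by blast
  qed
  then show ?thesis
    unfolding inj_on_def by (metis lessThan_iff linorder_cases)
qed

lemma orb_eq: assumes "x \<in> A" shows "orb f x = (\<lambda>k. (f ^^ k) x) ` {..<period x}"
  unfolding orb_def using funpow_mod_period[OF assms] period(1)[OF assms]
  by (auto intro!: image_eqI[where x = "_ mod period x"])

lemma card_orb: "x \<in> A \<Longrightarrow> card (orb f x) = period x"
  using orb_eq inj_on_funpow_below_period by (simp add: card_image)

lemma orb_subset: "x \<in> A \<Longrightarrow> orb f x \<subseteq> A"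
  unfolding orb_def using funpow_in by auto

lemma self_in_orb: "x \<in> orb f x"
  unfolding orb_def by (auto intro: exI[of _ 0])

lemma orb_eqI: assumes "x \<in> A" "y \<in> orb f x" shows "orb f y = orb f x"
proof -
  obtain j where j: "y = (f ^^ j) x" using assms(2) unfolding orb_def by auto
  have "(f ^^ k) x \<in> orb f y" for k
  proof -
    have "j \<le> period x * j" using period(1)[OF assms(1)] by simp
    then have split: "k + period x * j = (k + period x * j - j) + j" by linarith
    have "(f ^^ k) x = (f ^^ (k + period x * j)) x"
      using funpow_mod_period[OF assms(1), of k] funpow_mod_period[OF assms(1), of "k + period x * j"]
      by simp
    also have "\<dots> = (f ^^ (k + period x * j - j)) y"
      unfolding j by (subst split) (simp add: funpow_add)
    finally show ?thesis unfolding orb_def by auto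
  qed
  moreover have "(f ^^ k) y \<in> orb f x" for k
    unfolding j orb_def by (auto simp flip: funpow_add[THEN fun_cong, simplified])
  ultimately show ?thesis unfolding orb_def by auto
qed

lemma period_funpow: assumes "x \<in> A" shows "period ((f ^^ j) x) = period x"
proof -
  have "(f ^^ j) x \<in> orb f x" unfolding orb_def by blast
  then have "orb f ((f ^^ j) x) = orb f x" by (rule orb_eqI[OF assms])
  then show ?thesis using card_orb[OF funpow_in[OF assms, of j]] card_orb[OF assms] by simp
qed

lemma period_le_card: assumes "x \<in> A" shows "period x \<le> card A"
  using card_orb[OF assms] card_mono[OF finite orb_subset[OF assms]] by simp

definition cycle :: "'a \<Rightarrow> 'a list" where
  "cycle x = map (\<lambda>k. (f ^^ k) x) [0..<period x]"

lemma length_cycle: "length (cycle x) = period x"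
  unfolding cycle_def by simp

lemma nth_cycle: "j < period x \<Longrightarrow> cycle x ! j = (f ^^ j) x"
  unfolding cycle_def by simp

lemma set_cycle: "x \<in> A \<Longrightarrow> set (cycle x) = orb f x"
  unfolding cycle_def using orb_eq by (simp add: atLeast0LessThan)

lemma distinct_cycle: "x \<in> A \<Longrightarrow> distinct (cycle x)"
  unfolding cycle_def using inj_on_funpow_below_period by (simp add: distinct_map atLeast0LessThan)

lemma cycle_eq_Cons: "x \<in> A \<Longrightarrow> cycle x = x # tl (cycle x)"
  unfolding cycle_def using period(1) by (simp add: upt_conv_Cons)

lemma f_last_cycle: assumes "x \<in> A" shows "f (last (cycle x)) = x"
proof -
  have "last (cycle x) = (f ^^ (period x - 1)) x"
    unfolding cycle_def using period(1)[OF assms] by (simp add: last_map)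
  moreover have "Suc (period x - 1) = period x" using period(1)[OF assms] by simp
  then have "f ((f ^^ (period x - 1)) x) = (f ^^ period x) x"
    by (metis comp_apply funpow.simps(2))
  ultimately show ?thesis using period(2)[OF assms] by simp
qed

lemma cycle_funpow:
  assumes "x \<in> A" "j < period x"
  shows "cycle ((f ^^ j) x) = rotate j (cycle x)"
proof (rule nth_equalityI)
  show "length (cycle ((f ^^ j) x)) = length (rotate j (cycle x))"
    using period_funpow[OF assms(1)] by (simp add: length_cycle)
next
  fix k assume "k < length (cycle ((f ^^ j) x))"
  then have k: "k < period x" using period_funpow[OF assms(1)] by (simp add: length_cycle)
  have "rotate j (cycle x) ! k = (f ^^ ((k + j) mod period x)) x"
    using k by (simp add: nth_rotate length_cycle nth_cycle add.commute)
  also have "\<dots> = (f ^^ k) ((f ^^ j) x)"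
    using funpow_mod_period[OF assms(1), of "k + j"] by (simp add: funpow_add)
  finally show "cycle ((f ^^ j) x) ! k = rotate j (cycle x) ! k"
    using k period_funpow[OF assms(1)] by (simp add: nth_cycle)
qed

end

section \<open>Shortest representatives in the truncated subgroups\<close>

definition min_rep :: "'s list set \<Rightarrow> 's list" where
  "min_rep a = (SOME w. w \<in> a \<and> length w = (LEAST k. \<exists>w\<in>a. length w = k))"

lemma min_rep:
  assumes "w \<in> a" shows "min_rep a \<in> a" "length (min_rep a) = cx (Sub j a)"
proof -
  have "\<exists>w\<in>a. length w = (LEAST k. \<exists>w\<in>a. length w = k)"
    using LeastI_ex[of "\<lambda>k. \<exists>w\<in>a. length w = k"] assms by blast
  then have "min_rep a \<in> a \<and> length (min_rep a) = (LEAST k. \<exists>w\<in>a. length w = k)"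
    unfolding min_rep_def by (rule someI2_bex) auto
  then show "min_rep a \<in> a" "length (min_rep a) = cx (Sub j a)" by (auto simp: cx_def)
qed

lemma cx_Sub_le_length: "w \<in> a \<Longrightarrow> cx (Sub j a) \<le> length w"
  unfolding cx_def by (auto intro: Least_le)

text \<open>Letters of \<open>H~_j\<close> are replaced by shortest representatives, so a word over
  \<open>S-hat\<close> becomes a word over \<open>S\<close> whose length is its \<open>\<parallel>\<cdot>\<parallel>\<^sub>1\<close>-complexity.\<close>
definition letter_word :: "'s letter \<Rightarrow> 's list" where
  "letter_word l = (case l of Base s \<Rightarrow> [s] | Sub j a \<Rightarrow> min_rep a)"

definition letters_word :: "'s letter list \<Rightarrow> 's list" where
  "letters_word ls = concat (map letter_word ls)"

lemma letters_word_append: "letters_word (xs @ ys) = letters_word xs @ letters_word ys"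
  unfolding letters_word_def by simp

lemma letters_word_rotate_trivial:
  assumes "weq iv R (letters_word ys) []"
  shows "weq iv R (letters_word (rotate j ys)) []"
proof -
  define k where "k = j mod length ys"
  have "weq iv R (letters_word (take k ys) @ letters_word (drop k ys)) []"
    using assms letters_word_append[of "take k ys" "drop k ys"] by simp
  then have "weq iv R (letters_word (drop k ys) @ letters_word (take k ys)) []"
    by (rule weq_trivial_rotate)
  then show ?thesis unfolding k_def rotate_drop_take letters_word_append .
qed

locale trunc_subgroup =
  fixes P :: "'s relpres" and i :: nat
  assumes wf: "wf_relpres P" and index: "i < nsub P"
begin

abbreviation "iv \<equiv> ginv P"
abbreviation "S \<equiv> subgens P i"
abbreviation "W \<equiv> weq (ginv P) (tr_rels P i)"
abbreviation "Hletters \<equiv> Sub i ` Htil P i"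

lemma inv_in_S: "s \<in> S \<Longrightarrow> iv s \<in> S"
  using wf index unfolding wf_relpres_def by auto

lemma inv_inv_S: "s \<in> S \<Longrightarrow> iv (iv s) = s"
  using wf index unfolding wf_relpres_def by blast

lemma set_inv_word: "set w \<subseteq> S \<Longrightarrow> set (inv_word iv w) \<subseteq> S"
  using inv_in_S by auto

lemma tcl_self: "set w \<subseteq> S \<Longrightarrow> w \<in> tcl P i w"
  unfolding tcl_def by (auto intro: weq_refl)

lemma tcl_iff: "x \<in> tcl P i w \<longleftrightarrow> W w x \<and> set x \<subseteq> S"
  unfolding tcl_def by auto

lemma tcl_in_Htil: "set w \<subseteq> S \<Longrightarrow> tcl P i w \<in> Htil P i"
  unfolding Htil_def by auto

lemma Htil_cases:
  assumes "a \<in> Htil P i" obtains w where "set w \<subseteq> S" "a = tcl P i w"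
  using assms unfolding Htil_def by auto

lemma Htil_nonempty: "a \<in> Htil P i \<Longrightarrow> \<exists>w. w \<in> a"
  by (elim Htil_cases) (blast intro: tcl_self)

lemma Htil_subset: "a \<in> Htil P i \<Longrightarrow> x \<in> a \<Longrightarrow> set x \<subseteq> S"
  by (elim Htil_cases) (simp add: tcl_iff)

lemma Htil_weq: "a \<in> Htil P i \<Longrightarrow> x \<in> a \<Longrightarrow> y \<in> a \<Longrightarrow> W x y"
  by (elim Htil_cases) (auto simp: tcl_iff intro: weq_sym weq_trans)

lemma Htil_weq_closed: "a \<in> Htil P i \<Longrightarrow> x \<in> a \<Longrightarrow> W x y \<Longrightarrow> set y \<subseteq> S \<Longrightarrow> y \<in> a"
  by (elim Htil_cases) (auto simp: tcl_iff intro: weq_trans)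

lemma min_rep_in: "a \<in> Htil P i \<Longrightarrow> min_rep a \<in> a"
  using Htil_nonempty min_rep(1) by blast

lemma length_letters_word:
  "set ls \<subseteq> Hletters \<Longrightarrow> length (letters_word ls) = sum_list (map cx ls)"
  unfolding letters_word_def
  by (induction ls) (auto simp: letter_word_def dest!: Htil_nonempty intro: min_rep(2))

lemma set_letters_word: "set ls \<subseteq> Hletters \<Longrightarrow> set (letters_word ls) \<subseteq> S"
  unfolding letters_word_def letter_word_def using Htil_subset min_rep_in by fastforce

lemma some_word_in: "a \<in> Htil P i \<Longrightarrow> (SOME w. w \<in> a) \<in> a"
  using Htil_nonempty by (rule someI_ex)

lemma set_inv_some_word: "a \<in> Htil P i \<Longrightarrow> set (inv_word iv (SOME w. w \<in> a)) \<subseteq> S"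
  using set_inv_word Htil_subset some_word_in by blast

lemma inv_some_word_in_tinv:
  "a \<in> Htil P i \<Longrightarrow> inv_word iv (SOME w. w \<in> a) \<in> tinv P i a"
  unfolding tinv_def by (rule tcl_self[OF set_inv_some_word])

lemma tinv_in_Htil: "a \<in> Htil P i \<Longrightarrow> tinv P i a \<in> Htil P i"
  unfolding tinv_def by (rule tcl_in_Htil[OF set_inv_some_word])

lemma weq_min_rep_tinv: assumes "a \<in> Htil P i" shows "W (min_rep a @ min_rep (tinv P i a)) []"
proof -
  let ?w = "SOME w. w \<in> a"
  have "W (min_rep a) ?w" by (rule Htil_weq[OF assms min_rep_in[OF assms] some_word_in[OF assms]])
  moreover have "W (min_rep (tinv P i a)) (inv_word iv ?w)"
    using Htil_weq tinv_in_Htil min_rep_in inv_some_word_in_tinv assms by blast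
  ultimately have "W (min_rep a @ min_rep (tinv P i a)) (?w @ inv_word iv ?w)"
    by (rule weq_append)
  then show ?thesis using weq_append_inv_word weq_trans by blast
qed

lemma weq_min_rep_if_tinv:
  assumes a: "a \<in> Htil P i" and u: "set u \<subseteq> S" "tinv P i a = tcl P i u"
  shows "W (min_rep a) (inv_word iv u)"
proof -
  let ?w = "SOME w. w \<in> a"
  have "W u (inv_word iv ?w)" using inv_some_word_in_tinv[OF a] u(2) tcl_iff by simp
  then have "W (?w @ u) (?w @ inv_word iv ?w)" by (intro weq_append weq_refl)
  then have "W (?w @ u) []" using weq_append_inv_word weq_trans by blast
  then have "W ?w (inv_word iv u)" by (rule weq_trivial_append_imp)
  then show ?thesis using Htil_weq[OF a min_rep_in[OF a] some_word_in[OF a]] weq_trans by blast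
qed

lemma cx_le_one_if_tinv_gen:
  assumes a: "a \<in> Htil P i" and s: "s \<in> S" and t: "tinv P i a = tcl P i [iv s]"
  shows "cx (Sub i a) \<le> 1"
proof -
  have "W (min_rep a) [s]"
    using weq_min_rep_if_tinv[OF a _ t] inv_in_S[OF s] inv_inv_S[OF s] by simp
  then have "[s] \<in> a" using Htil_weq_closed[OF a min_rep_in[OF a]] s by simp
  then show ?thesis using cx_Sub_le_length by fastforce
qed

lemma cx_le_length_if_weq:
  assumes a: "a \<in> Htil P i" and u: "set u \<subseteq> S" "W (min_rep a @ u) []"
  shows "cx (Sub i a) \<le> length u"
proof -
  have "inv_word iv u \<in> a"
    using Htil_weq_closed[OF a min_rep_in[OF a] weq_trivial_append_imp[OF u(2)]] set_inv_word[OF u(1)] .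
  then show ?thesis using cx_Sub_le_length by fastforce
qed

lemma Hrels_word_trivial: assumes "ls \<in> Hrels P i" shows "W (letters_word ls) []"
proof -
  obtain ws where ws: "list_all2 (\<lambda>l u. set u \<subseteq> S \<and> l = Sub i (tcl P i u)) ls ws"
    "concat ws \<in> tcl P i []"
    using assms unfolding Hrels_def by auto
  have "list_all2 W (map letter_word ls) ws"
    using ws(1)
  proof (induction rule: list_all2_induct)
    case (Cons l ls u us)
    have "min_rep (tcl P i u) \<in> tcl P i u" using Cons(1) by (blast intro: min_rep_in tcl_in_Htil)
    then show ?case using Cons by (auto simp: letter_word_def tcl_iff intro: weq_sym)
  qed simp
  then have "W (letters_word ls) (concat ws)" unfolding letters_word_def by (rule weq_concat)
  moreover have "W (concat ws) []" using ws(2) tcl_iff weq_sym by blast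
  ultimately show ?thesis by (rule weq_trans)
qed

lemma winv_Hrels_word_trivial:
  assumes "winv P ls \<in> Hrels P i" and "set ls \<subseteq> Hletters"
  shows "W (letters_word ls) []"
proof -
  obtain ws where ws: "list_all2 (\<lambda>l u. set u \<subseteq> S \<and> l = Sub i (tcl P i u)) (winv P ls) ws"
    "concat ws \<in> tcl P i []"
    using assms(1) unfolding Hrels_def by auto
  have ws': "list_all2 (\<lambda>l u. set u \<subseteq> S \<and> hinv P l = Sub i (tcl P i u)) ls (rev ws)"
    using ws(1) unfolding winv_def by (simp add: list_all2_rev1 list_all2_map1)
  have "list_all2 (\<lambda>l u. W (letter_word l) (inv_word iv u)) ls (rev ws)"
    using ws' assms(2)
  proof (induction rule: list_all2_induct)
    case (Cons l ls u us)
    then obtain a where a: "a \<in> Htil P i" "l = Sub i a" by auto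
    then have "tinv P i a = tcl P i u" using Cons(1) by (simp add: hinv_def)
    then have "W (letter_word l) (inv_word iv u)"
      using Cons(1) a weq_min_rep_if_tinv by (simp add: letter_word_def)
    then show ?case using Cons by simp
  qed simp
  then have "W (concat (map letter_word ls)) (concat (map (inv_word iv) (rev ws)))"
    by (intro weq_concat) (simp add: list_all2_map1 list_all2_map2)
  moreover have "concat (map (inv_word iv) (rev ws)) = inv_word iv (concat ws)"
    by (induction ws) simp_all
  ultimately have "W (letters_word ls) (inv_word iv (concat ws))"
    unfolding letters_word_def by simp
  moreover have "W (inv_word iv (concat ws)) []"
  proof (rule weq_inv_word_trivial)
    show "\<forall>s\<in>set (concat ws). iv (iv s) = s" using ws(2) inv_inv_S unfolding tcl_iff by auto
    show "W (concat ws) []" using ws(2) tcl_iff weq_sym by blast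
  qed
  ultimately show ?thesis by (rule weq_trans)
qed

end

lemma hinv_Sub: "hinv P (Sub j a) = Sub j (tinv P j a)"
  by (simp add: hinv_def)

lemma Hrels_letter: "ls \<in> Hrels P j \<Longrightarrow> l \<in> set ls \<Longrightarrow> \<exists>a. l = Sub j a"
  unfolding Hrels_def by (auto simp: list_all2_conv_all_nth in_set_conv_nth)

lemma relsR'_letter:
  "ls \<in> relsR' P \<Longrightarrow> Sub j b \<in> set ls \<Longrightarrow> \<exists>s\<in>subgens P j. b = tcl P j [ginv P s]"
  unfolding relsR'_def by auto

locale cluster_diagram = trunc_subgroup P i for P :: "'s relpres" and i +
  fixes D :: "('d, 's) diagram" and C :: "'d set set" and F0 :: "'d set"
  assumes van_kampen: "van_kampen P D" and Hcell_F0: "Hcell P D i F0"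
    and cluster_eq: "C = {F. (F0, F) \<in> (cadj P D i)\<^sup>*}"
begin

lemma planar: "planar_map D"
  using van_kampen unfolding van_kampen_def by auto

lemma finite_darts: "finite (darts D)"
  using planar unfolding planar_map_def by auto

lemma alpha_alpha: "d \<in> darts D \<Longrightarrow> alpha D (alpha D d) = d"
  using planar unfolding planar_map_def by auto

lemma bij_alpha: "bij_betw (alpha D) (darts D) (darts D)"
  using planar unfolding planar_map_def by auto

lemma alpha_in_darts: "d \<in> darts D \<Longrightarrow> alpha D d \<in> darts D"
  using bij_alpha bij_betwE by blast

lemma bij_sigma: "bij_betw (sigma D) (darts D) (darts D)"
  using planar unfolding planar_map_def by auto

sublocale Phi: perm_on_finite "phi D" "darts D"
  using finite_darts bij_betw_trans[OF bij_alpha bij_sigma] unfolding phi_def by unfold_locales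

sublocale Sigma: perm_on_finite "sigma D" "darts D"
  using finite_darts bij_sigma by unfold_locales

lemma lab_in_letters: "d \<in> darts D \<Longrightarrow> lab D d \<in> letters P"
  using van_kampen unfolding van_kampen_def by auto

lemma lab_alpha: "d \<in> darts D \<Longrightarrow> lab D (alpha D d) = hinv P (lab D d)"
  using van_kampen unfolding van_kampen_def by auto

lemma inner_face_reads: "F \<in> inner_faces D \<Longrightarrow> reads P D (allrels P) F"
  using van_kampen unfolding van_kampen_def by auto

lemma fcyc_eq_cycle: "d \<in> darts D \<Longrightarrow> fcyc D d = Phi.cycle d"
  unfolding fcyc_def Phi.cycle_def using Phi.card_orb by simp

lemma face_eq_orb: "F \<in> faces D \<Longrightarrow> x \<in> F \<Longrightarrow> x \<in> darts D \<and> F = orb (phi D) x"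
  unfolding faces_def using Phi.orb_eqI Phi.orb_subset by blast

lemma inner_face_face: "F \<in> inner_faces D \<Longrightarrow> F \<in> faces D"
  unfolding inner_faces_def by auto

lemma phi_in_face: assumes "F \<in> faces D" "x \<in> F" shows "phi D x \<in> F"
proof -
  have "phi D x \<in> orb (phi D) x" unfolding orb_def by (auto intro: exI[of _ 1])
  then show ?thesis using face_eq_orb[OF assms] by simp
qed

lemma reads_letter:
  assumes "F \<in> faces D" "reads P D Wr F" "x \<in> F"
  shows "\<exists>w\<in>Wr. (\<exists>e\<in>F. w = bword D e \<or> w = winv P (bword D e)) \<and>
           (lab D x \<in> set w \<or> hinv P (lab D x) \<in> set w)"
proof -
  obtain e where e: "e \<in> F" "bword D e \<in> Wr \<or> winv P (bword D e) \<in> Wr"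
    using assms(2) unfolding reads_def by auto
  have "x \<in> set (fcyc D e)"
    using face_eq_orb[OF assms(1) e(1)] face_eq_orb[OF assms(1,3)] Phi.set_cycle fcyc_eq_cycle
    by (metis Phi.self_in_orb)
  then have "lab D x \<in> set (bword D e)" unfolding bword_def by auto
  then show ?thesis using e unfolding winv_def by auto
qed

lemma cluster_Hcell: "F \<in> C \<Longrightarrow> Hcell P D i F"
proof -
  assume "F \<in> C"
  then have "(F0, F) \<in> (cadj P D i)\<^sup>*" unfolding cluster_eq by auto
  then show ?thesis by (induction rule: rtrancl_induct) (auto simp: Hcell_F0 cadj_def)
qed

lemma cluster_face: "F \<in> C \<Longrightarrow> F \<in> faces D"
  using cluster_Hcell inner_face_face unfolding Hcell_def by blast

lemma cluster_cadj_closed: "F \<in> C \<Longrightarrow> (F, F') \<in> cadj P D i \<Longrightarrow> F' \<in> C"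
  unfolding cluster_eq by auto

lemma lab_cluster: assumes "x \<in> \<Union>C" shows "lab D x \<in> Hletters"
proof -
  obtain F where F: "F \<in> C" "x \<in> F" using assms by auto
  have H: "F \<in> faces D" "reads P D (Hrels P i) F"
    using cluster_Hcell[OF F(1)] cluster_face[OF F(1)] unfolding Hcell_def by auto
  obtain w where "w \<in> Hrels P i" "lab D x \<in> set w \<or> hinv P (lab D x) \<in> set w"
    using reads_letter[OF H F(2)] by blast
  then obtain a where "lab D x = Sub i a"
    using Hrels_letter by (cases "lab D x") (auto simp: hinv_def)
  moreover have "lab D x \<in> letters P" using lab_in_letters face_eq_orb H(1) F(2) by blast
  ultimately show ?thesis unfolding letters_def by auto
qed

lemma lab_kdarts: assumes "x \<in> kdarts D C" shows "lab D x \<in> Hletters"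
proof (cases "x \<in> \<Union>C")
  case False
  then have x: "x \<in> darts D" "alpha D x \<in> \<Union>C" using assms unfolding kdarts_def by auto
  obtain a where a: "a \<in> Htil P i" "lab D (alpha D x) = Sub i a" using lab_cluster x(2) by blast
  have "lab D x = Sub i (tinv P i a)"
    using lab_alpha[OF alpha_in_darts[OF x(1)]] alpha_alpha[OF x(1)] a(2) hinv_Sub by simp
  then show ?thesis using tinv_in_Htil[OF a(1)] by auto
qed (rule lab_cluster)

abbreviation path_word :: "'d list \<Rightarrow> 's list" where
  "path_word p \<equiv> letters_word (map (lab D) p)"

lemma face_word_trivial: assumes "d \<in> \<Union>C" shows "W (path_word (fcyc D d)) []"
proof -
  obtain F where F: "F \<in> C" "d \<in> F" using assms by auto
  have H: "F \<in> faces D" "reads P D (Hrels P i) F"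
    using cluster_Hcell[OF F(1)] cluster_face[OF F(1)] unfolding Hcell_def by auto
  obtain e where e: "e \<in> F" "bword D e \<in> Hrels P i \<or> winv P (bword D e) \<in> Hrels P i"
    using H(2) unfolding reads_def by auto
  have ed: "e \<in> darts D" "F = orb (phi D) e" using face_eq_orb[OF H(1) e(1)] by auto
  have "set (bword D e) \<subseteq> Hletters"
    using lab_cluster F(1) ed Phi.set_cycle unfolding bword_def fcyc_eq_cycle[OF ed(1)] by auto
  then have e_trivial: "W (letters_word (bword D e)) []"
    using e(2) Hrels_word_trivial winv_Hrels_word_trivial by blast
  obtain j where j: "j < Phi.period e" "d = (phi D ^^ j) e"
    using F(2) Phi.orb_eq[OF ed(1)] ed(2) by auto
  have "fcyc D d = rotate j (fcyc D e)"
    using fcyc_eq_cycle Phi.funpow_in ed(1) Phi.cycle_funpow[OF ed(1) j(1)] j(2) by simp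
  then have "map (lab D) (fcyc D d) = rotate j (bword D e)"
    unfolding bword_def by (simp add: rotate_map)
  then show ?thesis using letters_word_rotate_trivial[OF e_trivial] by simp
qed

lemma htpy_step_weq: assumes "htpy_step D C p q" shows "W (path_word q) (path_word p)"
proof -
  obtain u v X where X: "p = u @ v" "q = u @ X @ v" "W (path_word X) []"
  proof -
    consider (backtrack) u v d where "d \<in> kdarts D C" "p = u @ v" "q = u @ [d, alpha D d] @ v"
      | (cell) u v d where "d \<in> \<Union>C" "p = u @ v" "q = u @ fcyc D d @ v"
      using assms unfolding htpy_step_def by blast
    then show thesis
    proof cases
      case backtrack
      obtain a where a: "a \<in> Htil P i" "lab D d = Sub i a" using lab_kdarts[OF backtrack(1)] by blast
      have "d \<in> darts D" using backtrack(1) unfolding kdarts_def by auto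
      then have "lab D (alpha D d) = Sub i (tinv P i a)" using lab_alpha a(2) hinv_Sub by simp
      then have "W (path_word [d, alpha D d]) []"
        using weq_min_rep_tinv[OF a(1)] a(2) by (simp add: letters_word_def letter_word_def)
      then show thesis using that backtrack by blast
    next
      case cell
      then show thesis using that face_word_trivial by blast
    qed
  qed
  have "W (path_word u @ path_word X @ path_word v) (path_word u @ [] @ path_word v)"
    by (rule weq_append_cong[OF X(3)])
  then show ?thesis using X(1,2) by (simp add: letters_word_append)
qed

lemma htpy_weq: "htpy D C p q \<Longrightarrow> W (path_word p) (path_word q)"
  unfolding htpy_def
proof (induction rule: rtranclp_induct)
  case (step y z)
  then have "W (path_word y) (path_word z)" using htpy_step_weq weq_sym by blast
  then show ?case using step.IH weq_trans by blast
qed (rule weq_refl)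

end

section \<open>The boundary cycle of a cluster\<close>

context cluster_diagram
begin

lemma bd_memD: "d \<in> bd D C \<Longrightarrow> d \<in> darts D \<and> d \<in> \<Union>C \<and> alpha D d \<notin> \<Union>C"
  unfolding bd_def by auto

lemma finite_bd: "finite (bd D C)"
  using finite_darts unfolding bd_def by auto

lemma cluster_phi: "x \<in> \<Union>C \<Longrightarrow> phi D x \<in> \<Union>C"
  using cluster_face phi_in_face by blast

lemma cluster_darts: "x \<in> \<Union>C \<Longrightarrow> x \<in> darts D"
  using cluster_face face_eq_orb by blast

text \<open>Turning around the head of a boundary dart \<open>d\<close>, one stays inside the cluster until
  the next boundary dart: \<open>sigma (alpha x) = phi x\<close> stays in the 2-cell of \<open>x\<close>, and a dart
  of the cluster that is not on its boundary has its reverse in the cluster.\<close>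
lemma turn_in_cluster:
  assumes d: "d \<in> bd D C"
  shows "0 < j \<Longrightarrow> (\<forall>j'. 0 < j' \<and> j' < j \<longrightarrow> (sigma D ^^ j') (alpha D d) \<notin> bd D C)
     \<Longrightarrow> (sigma D ^^ j) (alpha D d) \<in> \<Union>C"
proof (induction j)
  case (Suc j)
  show ?case
  proof (cases j)
    case 0
    then show ?thesis using cluster_phi bd_memD[OF d] by (simp add: phi_def)
  next
    case (Suc j0)
    then have y: "(sigma D ^^ j) (alpha D d) \<in> \<Union>C" "(sigma D ^^ j) (alpha D d) \<notin> bd D C"
      using Suc.IH Suc.prems by auto
    have yd: "(sigma D ^^ j) (alpha D d) \<in> darts D" using cluster_darts y(1) by blast
    then have "alpha D ((sigma D ^^ j) (alpha D d)) \<in> \<Union>C" using y unfolding bd_def by auto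
    then have "phi D (alpha D ((sigma D ^^ j) (alpha D d))) \<in> \<Union>C" by (rule cluster_phi)
    then show ?thesis using alpha_alpha[OF yd] by (simp add: phi_def)
  qed
qed simp

lemma turn_reaches_bd: assumes d: "d \<in> bd D C" shows "\<exists>k>0. (sigma D ^^ k) (alpha D d) \<in> bd D C"
proof (rule ccontr)
  assume none: "\<not> (\<exists>k>0. (sigma D ^^ k) (alpha D d) \<in> bd D C)"
  have x: "alpha D d \<in> darts D" using alpha_in_darts bd_memD d by blast
  have "(sigma D ^^ Sigma.period (alpha D d)) (alpha D d) \<in> \<Union>C"
    using turn_in_cluster[OF d, of "Sigma.period (alpha D d)"] Sigma.period(1)[OF x] none by blast
  then show False using Sigma.period(2)[OF x] bd_memD d by simp
qed

definition bturn :: "'d \<Rightarrow> nat" where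
  "bturn d = (LEAST k. k > 0 \<and> (sigma D ^^ k) (alpha D d) \<in> bd D C)"

definition bnext :: "'d \<Rightarrow> 'd" where
  "bnext d = (sigma D ^^ bturn d) (alpha D d)"

lemma bnext:
  assumes d: "d \<in> bd D C"
  shows "bturn d > 0" "bnext d \<in> bd D C"
    "\<And>j. 0 < j \<Longrightarrow> j \<le> bturn d \<Longrightarrow> (sigma D ^^ j) (alpha D d) \<in> \<Union>C"
proof -
  have L: "bturn d > 0 \<and> (sigma D ^^ bturn d) (alpha D d) \<in> bd D C"
    unfolding bturn_def using LeastI_ex[OF turn_reaches_bd[OF d]] .
  then show "bturn d > 0" "bnext d \<in> bd D C" unfolding bnext_def by auto
  fix j assume j: "0 < j" "j \<le> bturn d"
  have "(sigma D ^^ j') (alpha D d) \<notin> bd D C" if "0 < j'" "j' < j" for j'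
    using not_less_Least[of j' "\<lambda>k. k > 0 \<and> (sigma D ^^ k) (alpha D d) \<in> bd D C"] that j(2)
    unfolding bturn_def by auto
  then show "(sigma D ^^ j) (alpha D d) \<in> \<Union>C" using turn_in_cluster[OF d j(1)] by blast
qed

lemma vertex_bnext: assumes d: "d \<in> bd D C" shows "vertex D (bnext d) = head D d"
proof -
  have x: "alpha D d \<in> darts D" using alpha_in_darts bd_memD d by blast
  have "bnext d \<in> orb (sigma D) (alpha D d)" unfolding bnext_def orb_def by blast
  then show ?thesis unfolding vertex_def head_def using Sigma.orb_eqI[OF x] by blast
qed

lemma bnext_eqD:
  assumes d: "d \<in> bd D C" and d': "d' \<in> bd D C" and eq: "bnext d = bnext d'"
    and le: "bturn d \<le> bturn d'"
  shows "d = d'"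
proof -
  have xd: "alpha D d \<in> darts D" "alpha D d' \<in> darts D"
    using alpha_in_darts bd_memD d d' by blast+
  have "bturn d' = bturn d + (bturn d' - bturn d)" using le by simp
  then have "(sigma D ^^ bturn d') (alpha D d')
      = (sigma D ^^ bturn d) ((sigma D ^^ (bturn d' - bturn d)) (alpha D d'))"
    by (metis funpow_add o_apply)
  then have "(sigma D ^^ bturn d) (alpha D d)
      = (sigma D ^^ bturn d) ((sigma D ^^ (bturn d' - bturn d)) (alpha D d'))"
    using eq unfolding bnext_def by simp
  then have alpha_d: "alpha D d = (sigma D ^^ (bturn d' - bturn d)) (alpha D d')"
    using inj_onD[OF Sigma.inj_on_funpow _ xd(1) Sigma.funpow_in[OF xd(2)]] by simp
  have "bturn d' - bturn d = 0"
  proof (rule ccontr)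
    assume "bturn d' - bturn d \<noteq> 0"
    then have "alpha D d \<in> \<Union>C" using bnext(3)[OF d'] alpha_d by simp
    then show False using bd_memD d by blast
  qed
  then have "alpha D (alpha D d) = alpha D (alpha D d')" using alpha_d by simp
  then show ?thesis using alpha_alpha bd_memD d d' by simp
qed

lemma bij_bnext: "bij_betw bnext (bd D C) (bd D C)"
proof -
  have "inj_on bnext (bd D C)"
    unfolding inj_on_def using bnext_eqD by (metis nat_le_linear)
  then show ?thesis
    unfolding bij_betw_def using endo_inj_surj[OF finite_bd _ \<open>inj_on bnext (bd D C)\<close>] bnext(2)
    by blast
qed

sublocale Bnext: perm_on_finite bnext "bd D C"
  using finite_bd bij_bnext by unfold_locales

lemma bnext_cycle_closed_path:
  assumes d0: "d0 \<in> bd D C" shows "closed_path D C (Bnext.cycle d0)"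
proof -
  let ?p = "Bnext.cycle d0"
  have p_bd: "set ?p \<subseteq> bd D C" using Bnext.set_cycle[OF d0] Bnext.orb_subset[OF d0] by simp
  have "vertex D (?p ! Suc j) = head D (?p ! j)" if "Suc j < length ?p" for j
  proof -
    have "?p ! Suc j = bnext (?p ! j)"
      using that by (simp add: Bnext.length_cycle Bnext.nth_cycle)
    moreover have "?p ! j \<in> bd D C" using p_bd that by auto
    ultimately show ?thesis using vertex_bnext by simp
  qed
  moreover have "bd D C \<subseteq> kdarts D C" unfolding bd_def kdarts_def by auto
  moreover have "head D (last ?p) = vertex D (hd ?p)"
  proof -
    have "?p \<noteq> []" "hd ?p = d0" using Bnext.cycle_eq_Cons[OF d0] by (metis list.distinct(1), metis list.sel(1))
    then have "last ?p \<in> bd D C" using p_bd last_in_set by blast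
    then show ?thesis using vertex_bnext Bnext.f_last_cycle[OF d0] \<open>hd ?p = d0\<close> by metis
  qed
  ultimately show ?thesis unfolding closed_path_def is_path_def using p_bd by auto
qed

end

section \<open>Complexity of the boundary letters\<close>

context cluster_diagram
begin

lemma bd_alpha_not_Hcell:
  assumes d: "d \<in> bd D C" and F': "alpha D d \<in> F'" shows "\<not> Hcell P D i F'"
proof
  assume H: "Hcell P D i F'"
  obtain F where F: "F \<in> C" "d \<in> F" using bd_memD[OF d] by auto
  have "(F, F') \<in> cadj P D i" unfolding cadj_def using cluster_Hcell[OF F(1)] H F(2) F' by blast
  then have "F' \<in> C" using cluster_cadj_closed F(1) by blast
  then show False using F' bd_memD[OF d] by blast
qed

text \<open>An edge of \<open>\<partial>C\<close> that also bounds a 2-cell outside \<open>C\<close> lies on a relator of type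
  \<open>R'\<close> (a 2-cell of type \<open>H~_i\<close> would belong to the cluster), hence carries a letter
  \<open>s~\<close> or its inverse.\<close>
lemma cx_inner_bd_le_one:
  assumes d: "d \<in> bd D C" and inner: "d \<notin> bd D (inner_faces D)"
  shows "cx (lab D d) \<le> 1"
proof -
  have dD: "d \<in> darts D" "d \<in> \<Union>C" "alpha D d \<notin> \<Union>C" using bd_memD[OF d] by auto
  have "C \<subseteq> inner_faces D" using cluster_Hcell unfolding Hcell_def by auto
  then obtain F' where F': "F' \<in> inner_faces D" "alpha D d \<in> F'"
    using dD inner unfolding bd_def by auto
  obtain a where a: "a \<in> Htil P i" "lab D d = Sub i a" using lab_cluster dD(2) by blast
  have "lab D (alpha D d) = Sub i (tinv P i a)" using lab_alpha[OF dD(1)] a(2) hinv_Sub by simp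
  moreover have "hinv P (lab D (alpha D d)) = lab D d"
    using lab_alpha[OF alpha_in_darts[OF dD(1)]] alpha_alpha[OF dD(1)] by simp
  ultimately obtain w e where w: "w \<in> allrels P" "e \<in> F'" "w = bword D e \<or> w = winv P (bword D e)"
    and letter: "Sub i (tinv P i a) \<in> set w \<or> Sub i a \<in> set w"
    using reads_letter[OF inner_face_face[OF F'(1)] inner_face_reads[OF F'(1)] F'(2)] a(2)
    by auto
  have "w \<notin> Hrels P i"
  proof
    assume "w \<in> Hrels P i"
    then have "Hcell P D i F'" using F'(1) w(2,3) unfolding Hcell_def reads_def by blast
    then show False using bd_alpha_not_Hcell[OF d F'(2)] by blast
  qed
  moreover have "w \<notin> Hrels P j" if "j \<noteq> i" for j
    using letter Hrels_letter that by blast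
  ultimately have "w \<in> relsR' P" using w(1) unfolding allrels_def by (metis UN_E UnE)
  then show ?thesis
    using letter
  proof (elim disjE)
    assume "Sub i (tinv P i a) \<in> set w"
    then obtain s where "s \<in> S" "tinv P i a = tcl P i [iv s]"
      using relsR'_letter \<open>w \<in> relsR' P\<close> by blast
    then show ?thesis using cx_le_one_if_tinv_gen[OF a(1)] a(2) by simp
  next
    assume "Sub i a \<in> set w"
    then obtain s where "s \<in> S" "a = tcl P i [iv s]"
      using relsR'_letter \<open>w \<in> relsR' P\<close> by blast
    then have "[iv s] \<in> a" using tcl_self inv_in_S by simp
    then show ?thesis using cx_Sub_le_length a(2) by fastforce
  qed
qed

text \<open>The boundary cycle through \<open>d0\<close> is null-homotopic in the simply connected \<open>C\<close>,
  so the letter of \<open>d0\<close> equals in \<open>H~_i\<close> the inverse of the product of the other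
  letters along the cycle.\<close>
lemma cx_bd_le_card:
  assumes d0: "d0 \<in> bd D C" and others: "\<forall>d\<in>bd D C - {d0}. cx (lab D d) \<le> 1"
    and sc: "simply_connected D C"
  shows "cx (lab D d0) \<le> card (bd D C) - 1"
proof -
  obtain q where pq: "Bnext.cycle d0 = d0 # q" using Bnext.cycle_eq_Cons[OF d0] by blast
  have q: "set q \<subseteq> bd D C - {d0}"
    using Bnext.distinct_cycle[OF d0] Bnext.set_cycle[OF d0] Bnext.orb_subset[OF d0] pq by auto
  then have qH: "set (map (lab D) q) \<subseteq> Hletters" using lab_cluster bd_memD by auto
  have "htpy D C (Bnext.cycle d0) []"
    using sc bnext_cycle_closed_path[OF d0] unfolding simply_connected_def by blast
  then have "W (path_word (Bnext.cycle d0)) []"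
    using htpy_weq by (fastforce simp: letters_word_def)
  moreover obtain a0 where a0: "a0 \<in> Htil P i" "lab D d0 = Sub i a0"
    using lab_cluster bd_memD[OF d0] by blast
  ultimately have "W (min_rep a0 @ path_word q) []"
    using pq by (simp add: letters_word_def letter_word_def)
  then have "cx (lab D d0) \<le> length (path_word q)"
    using cx_le_length_if_weq[OF a0(1) set_letters_word[OF qH]] a0(2) by simp
  also have "\<dots> = (\<Sum>d\<leftarrow>q. cx (lab D d))"
    using length_letters_word[OF qH] by (simp add: comp_def)
  also have "\<dots> \<le> (\<Sum>d\<leftarrow>q. 1)"
    using q others by (intro sum_list_mono) auto
  also have "\<dots> = Bnext.period d0 - 1"
    using Bnext.length_cycle[of d0] pq by (simp add: sum_list_triv)
  also have "\<dots> \<le> card (bd D C) - 1"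
    using Bnext.period_le_card[OF d0] by simp
  finally show ?thesis .
qed

lemma bd_exceptional_dart:
  assumes "\<not> complicated D C" "d \<in> bd D C"
  obtains d0 where "d0 \<in> bd D C" "\<forall>d\<in>bd D C - {d0}. cx (lab D d) \<le> 1"
proof -
  let ?O = "bd D C \<inter> bd D (inner_faces D)"
  have "card ?O \<le> Suc 0" using assms(1) unfolding complicated_def by simp
  then have O: "\<forall>x\<in>?O. \<forall>y\<in>?O. x = y"
    using card_le_Suc0_iff_eq finite_bd by blast
  show thesis
  proof (cases "?O = {}")
    case True
    then show thesis using that[OF assms(2)] cx_inner_bd_le_one by blast
  next
    case False
    then obtain d0 where d0: "d0 \<in> ?O" by blast
    have "cx (lab D d) \<le> 1" if "d \<in> bd D C - {d0}" for d
    proof (rule cx_inner_bd_le_one)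
      show "d \<in> bd D C" using that by blast
      show "d \<notin> bd D (inner_faces D)" using that O d0 by blast
    qed
    then show thesis using that d0 by blast
  qed
qed

end

lemma Max_sum_le_one_exception:
  fixes c :: "'a \<Rightarrow> nat"
  assumes B: "finite B" "d0 \<in> B" and others: "\<forall>d\<in>B - {d0}. c d \<le> 1"
    and d0: "c d0 \<le> card B - 1"
  shows "Max (insert 0 (c ` B)) \<le> card B \<and> sum c B \<le> 2 * card B"
proof
  have pos: "0 < card B" using B by (auto simp: card_gt_0_iff)
  have "c d \<le> card B" if "d \<in> B" for d
  proof (cases "d = d0")
    case False
    then have "c d \<le> 1" using others that by blast
    then show ?thesis using pos by linarith
  next
    case True
    then show ?thesis using d0 by simp
  qed
  then show "Max (insert 0 (c ` B)) \<le> card B"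
    using B(1) by simp
  have "sum (\<lambda>_. 1) (B - {d0}) = card B - 1" using B by simp
  moreover have "sum c (B - {d0}) \<le> sum (\<lambda>_. 1) (B - {d0})"
    using others by (intro sum_mono) auto
  moreover have "sum c B = c d0 + sum c (B - {d0})" using sum.remove[OF B] .
  ultimately show "sum c B \<le> 2 * card B" using d0 by linarith
qed

theorem lemma2p5:
  fixes P :: "'s relpres" and D :: "('d, 's) diagram" and C :: "'d set set"
  assumes "wf_relpres P"
    and "van_kampen P D"
    and "cluster P D C"
    and "simply_connected D C"
    and "\<not> complicated D C"
  shows "bd_norm_inf D C \<le> bd_length D C \<and> bd_norm1 D C \<le> 2 * bd_length D C"
proof -
  obtain i F0 where i: "i < nsub P" "Hcell P D i F0" "C = {F. (F0, F) \<in> (cadj P D i)\<^sup>*}"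
    using assms(3) unfolding cluster_def by blast
  interpret cluster_diagram P i D C F0
    by (intro cluster_diagram.intro trunc_subgroup.intro cluster_diagram_axioms.intro assms(1,2) i)
  show ?thesis
  proof (cases "bd D C = {}")
    case True
    then show ?thesis by (simp add: bd_norm_inf_def bd_norm1_def bd_length_def)
  next
    case False
    then obtain d0 where d0: "d0 \<in> bd D C" "\<forall>d\<in>bd D C - {d0}. cx (lab D d) \<le> 1"
      using bd_exceptional_dart[OF assms(5)] by blast
    have "cx (lab D d0) \<le> card (bd D C) - 1" by (rule cx_bd_le_card[OF d0 assms(4)])
    from Max_sum_le_one_exception[OF finite_bd d0 this] show ?thesis
      unfolding bd_norm_inf_def bd_norm1_def bd_length_def .
  qed
qed

end
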